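(* Let $G$ be a finite transitive permutation group on a set $V$ with point stabilizers of order $3$, and suppose $G$ admits a maximal basic intersecting set $\mathcal{F}$ with $|\mathcal{F}|=4$. Then no point stabilizer $G_v$, $v\in V$, is contained in $\mathcal{F}$; that is, $\mathcal{F}=\{1,x,y,z\}$ with $x$, $y$ and $z$ belonging to different point stabilizers.
   Context: A subset $\mathcal{F}\subseteq G$ is intersecting if for all $g,h\in\mathcal{F}$ there is $v\in V$ with $g(v)=h(v)$; it is maximal if not properly contained in another intersecting set; it is basic if it contains the identity $1$. *)

theory Defs
  imports "HOL-Algebra.Bij"
begin

text \<open>A permutation group on V is a subgroup G of the group of all bijections of V
  (the carrier of G is a set of permutations of V, extensional on V).\<close>

definition transitive_on :: "'a set \<Rightarrow> ('a \<Rightarrow> 'a) set \<Rightarrow> bool" where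
  "transitive_on V G \<longleftrightarrow> (\<forall>u\<in>V. \<forall>w\<in>V. \<exists>g\<in>G. g u = w)"

definition point_stabilizer :: "('a \<Rightarrow> 'a) set \<Rightarrow> 'a \<Rightarrow> ('a \<Rightarrow> 'a) set" where
  "point_stabilizer G v = {g \<in> G. g v = v}"

definition intersecting :: "'a set \<Rightarrow> ('a \<Rightarrow> 'a) set \<Rightarrow> bool" where
  "intersecting V F \<longleftrightarrow> (\<forall>g\<in>F. \<forall>h\<in>F. \<exists>v\<in>V. g v = h v)"

definition maximal_intersecting :: "'a set \<Rightarrow> ('a \<Rightarrow> 'a) set \<Rightarrow> ('a \<Rightarrow> 'a) set \<Rightarrow> bool" where
  "maximal_intersecting V G F \<longleftrightarrow> F \<subseteq> G \<and> intersecting V F \<and>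
     (\<forall>F'. F \<subset> F' \<and> F' \<subseteq> G \<longrightarrow> \<not> intersecting V F')"

end

theory Submission
  imports Defs
begin

text \<open>Suppose the point stabilizer \<open>H = G\<^sub>v\<close> (of order 3) lies in \<open>F\<close>; since \<open>|F| = 4\<close>,
  \<open>F = H \<union> {z}\<close> with \<open>z \<notin> H\<close>. Pick \<open>1 \<noteq> x \<in> H\<close> and put \<open>h = x z\<close>. Left multiplication by
  \<open>x\<close> permutes \<open>H\<close> and preserves agreement of permutations, so \<open>h\<close> agrees with every element
  of \<open>H\<close> because \<open>z\<close> does; and \<open>h\<close> agrees with \<open>z\<close> at \<open>z\<^sup>-\<^sup>1 v\<close>. As \<open>h \<notin> F\<close>, this contradicts
  maximality. If two distinct nonidentity elements of \<open>F\<close> fixed a common point \<open>v\<close>, then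
  together with \<open>1\<close> they would exhaust \<open>G\<^sub>v\<close>, which would then lie in \<open>F\<close>.\<close>

definition agree_somewhere :: "'a set \<Rightarrow> ('a \<Rightarrow> 'a) \<Rightarrow> ('a \<Rightarrow> 'a) \<Rightarrow> bool" where
  "agree_somewhere V g h \<longleftrightarrow> (\<exists>u\<in>V. g u = h u)"

lemma agree_somewhere_sym: "agree_somewhere V g h \<longleftrightarrow> agree_somewhere V h g"
  by (metis agree_somewhere_def)

lemma intersecting_iff_agree_somewhere:
  "intersecting V F \<longleftrightarrow> (\<forall>g\<in>F. \<forall>h\<in>F. agree_somewhere V g h)"
  by (simp add: intersecting_def agree_somewhere_def)

lemma intersecting_insert:
  "intersecting V (insert h F) \<longleftrightarrow>
     V \<noteq> {} \<and> (\<forall>f\<in>F. agree_somewhere V h f) \<and> intersecting V F"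
  unfolding intersecting_iff_agree_somewhere
  by (auto simp: agree_somewhere_sym) (auto simp: agree_somewhere_def)

lemma BijGroup_mult_apply:
  "g \<in> Bij V \<Longrightarrow> k \<in> Bij V \<Longrightarrow> u \<in> V \<Longrightarrow> (g \<otimes>\<^bsub>BijGroup V\<^esub> k) u = g (k u)"
  by (simp add: BijGroup_def compose_def)

lemma BijGroup_one_apply: "u \<in> V \<Longrightarrow> \<one>\<^bsub>BijGroup V\<^esub> u = u"
  by (simp add: BijGroup_def)

lemma agree_somewhere_mult_left:
  assumes "g \<in> Bij V" "a \<in> Bij V" "b \<in> Bij V"
  shows "agree_somewhere V (g \<otimes>\<^bsub>BijGroup V\<^esub> a) (g \<otimes>\<^bsub>BijGroup V\<^esub> b) \<longleftrightarrow>
         agree_somewhere V a b"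
proof -
  have "g (a u) = g (b u) \<longleftrightarrow> a u = b u" if "u \<in> V" for u
  proof -
    have "a u \<in> V" "b u \<in> V" using assms(2,3) that Bij_imp_funcset by blast+
    moreover have "inj_on g V" using assms(1) by (simp add: Bij_def bij_betw_def)
    ultimately show ?thesis by (simp add: inj_on_eq_iff)
  qed
  then show ?thesis
    using assms by (simp add: agree_somewhere_def BijGroup_mult_apply)
qed

lemma agree_somewhere_mult_right:
  assumes "g \<in> Bij V" "a \<in> Bij V" "b \<in> Bij V"
  shows "agree_somewhere V (a \<otimes>\<^bsub>BijGroup V\<^esub> g) (b \<otimes>\<^bsub>BijGroup V\<^esub> g) \<longleftrightarrow>
         agree_somewhere V a b"
proof -
  have "g ` V = V" using assms(1) by (simp add: Bij_def bij_betw_def)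
  then have "(\<exists>w\<in>V. a (g w) = b (g w)) \<longleftrightarrow> (\<exists>u\<in>V. a u = b u)"
    by (metis imageE image_eqI)
  then show ?thesis
    using assms by (simp add: agree_somewhere_def BijGroup_mult_apply)
qed

lemma subgroup_point_stabilizer:
  assumes "subgroup G (BijGroup V)" "v \<in> V"
  shows "subgroup (point_stabilizer G v) (BijGroup V)"
proof -
  have GB: "G \<subseteq> Bij V"
    using subgroup.subset[OF assms(1)] by (simp add: BijGroup_def)
  show ?thesis
  proof
    show "point_stabilizer G v \<subseteq> carrier (BijGroup V)"
      using subgroup.subset[OF assms(1)] by (auto simp: point_stabilizer_def)
    show "\<one>\<^bsub>BijGroup V\<^esub> \<in> point_stabilizer G v"
      using subgroup.one_closed[OF assms(1)] assms(2)
      by (simp add: point_stabilizer_def BijGroup_one_apply)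
  next
    fix a b assume "a \<in> point_stabilizer G v" "b \<in> point_stabilizer G v"
    then show "a \<otimes>\<^bsub>BijGroup V\<^esub> b \<in> point_stabilizer G v"
      using GB assms(2) subgroup.m_closed[OF assms(1)]
      by (auto simp: point_stabilizer_def BijGroup_mult_apply subset_iff)
  next
    fix a assume a: "a \<in> point_stabilizer G v"
    then have "a \<in> Bij V" "a v = v" using GB by (auto simp: point_stabilizer_def)
    then have "(inv\<^bsub>BijGroup V\<^esub> a) v = v"
      using assms(2) by (simp add: inv_BijGroup Bij_def) (metis bij_betw_inv_into_left)
    then show "inv\<^bsub>BijGroup V\<^esub> a \<in> point_stabilizer G v"
      using a subgroup.m_inv_closed[OF assms(1)] by (simp add: point_stabilizer_def)
  qed
qed

lemma (in group) mult_notin_insert_subgroup: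
  assumes H: "subgroup H G" and x: "x \<in> H" "x \<noteq> \<one>" and z: "z \<in> carrier G" "z \<notin> H"
  shows "x \<otimes> z \<notin> insert z H"
proof
  interpret H: subgroup H G by (rule H)
  have xc: "x \<in> carrier G" using x(1) H.subset by blast
  assume "x \<otimes> z \<in> insert z H"
  then consider "x \<otimes> z = z" | "x \<otimes> z \<in> H" by blast
  then show False
  proof cases
    case 1
    then show False using x(2) xc z(1) r_cancel_one by simp
  next
    case 2
    have "z = inv x \<otimes> (x \<otimes> z)" using xc z(1) by (simp flip: m_assoc)
    also have "\<dots> \<in> H" using H.m_closed[OF H.m_inv_closed[OF x(1)] 2] .
    finally show False using z(2) by contradiction
  qed
qed

lemma stabilizer_mult_agrees_with_stabilizer_insert:
  assumes G: "subgroup G (BijGroup V)" and v: "v \<in> V" and z: "z \<in> G"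
    and x: "x \<in> point_stabilizer G v"
    and F_int: "intersecting V (insert z (point_stabilizer G v))"
    and f: "f \<in> insert z (point_stabilizer G v)"
  shows "agree_somewhere V (x \<otimes>\<^bsub>BijGroup V\<^esub> z) f"
proof -
  let ?B = "BijGroup V"
  let ?H = "point_stabilizer G v"
  interpret B: group ?B by (rule group_BijGroup)
  interpret H: subgroup ?H ?B by (rule subgroup_point_stabilizer[OF G v])
  have carrier: "carrier ?B = Bij V" by (simp add: BijGroup_def)
  have zc: "z \<in> carrier ?B" using z subgroup.subset[OF G] by blast
  have xc: "x \<in> carrier ?B" using x H.subset by blast
  have zB: "z \<in> Bij V" and xB: "x \<in> Bij V" using zc xc carrier by simp_all
  show ?thesis
  proof (cases "f = z")
    case True
    have oneB: "\<one>\<^bsub>?B\<^esub> \<in> Bij V" using B.one_closed carrier by simp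
    have "agree_somewhere V x \<one>\<^bsub>?B\<^esub>"
      using v x by (auto simp: agree_somewhere_def point_stabilizer_def BijGroup_one_apply)
    then show ?thesis
      using agree_somewhere_mult_right[OF zB xB oneB] B.l_one[OF zc] True by simp
  next
    case False
    then have f: "f \<in> ?H" using f by blast
    define f' where "f' = inv\<^bsub>?B\<^esub> x \<otimes>\<^bsub>?B\<^esub> f"
    have f': "f' \<in> ?H" unfolding f'_def using H.m_closed[OF H.m_inv_closed[OF x] f] .
    then have f'B: "f' \<in> Bij V" using H.subset carrier by blast
    have "f = x \<otimes>\<^bsub>?B\<^esub> f'"
      unfolding f'_def using xc f H.subset by (auto simp flip: B.m_assoc)
    moreover have "agree_somewhere V z f'"
      using f' F_int by (simp add: intersecting_iff_agree_somewhere)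
    ultimately show ?thesis
      using agree_somewhere_mult_left[OF xB zB f'B] by simp
  qed
qed

lemma stabilizer_insert_not_maximal_intersecting:
  assumes G: "subgroup G (BijGroup V)" and v: "v \<in> V"
    and z: "z \<in> G" "z \<notin> point_stabilizer G v"
    and nontrivial: "point_stabilizer G v \<noteq> {\<one>\<^bsub>BijGroup V\<^esub>}"
  shows "\<not> maximal_intersecting V G (insert z (point_stabilizer G v))"
proof
  let ?B = "BijGroup V"
  let ?H = "point_stabilizer G v"
  let ?F = "insert z ?H"
  assume max: "maximal_intersecting V G ?F"
  then have F_int: "intersecting V ?F" by (simp add: maximal_intersecting_def)
  have H: "subgroup ?H ?B" by (rule subgroup_point_stabilizer[OF G v])
  obtain x where x: "x \<in> ?H" "x \<noteq> \<one>\<^bsub>?B\<^esub>"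
    using nontrivial subgroup.one_closed[OF H] by blast
  define h where "h = x \<otimes>\<^bsub>?B\<^esub> z"
  have "h \<in> G"
    unfolding h_def using x(1) z(1) subgroup.m_closed[OF G]
    by (simp add: point_stabilizer_def)
  moreover have "h \<notin> ?F"
    unfolding h_def using subgroup.subset[OF G] z
    by (intro group.mult_notin_insert_subgroup[OF group_BijGroup H x]) auto
  moreover have "intersecting V (insert h ?F)"
    unfolding h_def using F_int v
    by (simp add: intersecting_insert stabilizer_mult_agrees_with_stabilizer_insert[OF G v z(1) x(1)])
  ultimately show False
    using max unfolding maximal_intersecting_def by blast
qed

lemma maximal_intersecting_stabilizer_subset_card:
  assumes G: "subgroup G (BijGroup V)" and v: "v \<in> V"
    and max: "maximal_intersecting V G F"
    and HF: "point_stabilizer G v \<subseteq> F"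
    and finite: "finite (point_stabilizer G v)"
    and nontrivial: "point_stabilizer G v \<noteq> {\<one>\<^bsub>BijGroup V\<^esub>}"
  shows "card F \<noteq> card (point_stabilizer G v) + 1"
proof
  let ?H = "point_stabilizer G v"
  assume card_F: "card F = card ?H + 1"
  then have "finite F" by (intro card_ge_0_finite) simp
  then have "card (F - ?H) = 1" using card_F card_Diff_subset[OF finite HF] by simp
  then obtain z where "F - ?H = {z}" by (auto simp: card_1_singleton_iff)
  moreover have "F \<subseteq> G" using max by (simp add: maximal_intersecting_def)
  ultimately have "F = insert z ?H" "z \<in> G" "z \<notin> ?H" using HF by auto
  then show False
    using stabilizer_insert_not_maximal_intersecting[OF G v _ _ nontrivial] max by metis
qed

theorem corollary5p3:
  fixes V :: "'a set" and G F :: "('a \<Rightarrow> 'a) set"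
  assumes "subgroup G (BijGroup V)"
    and "finite G"
    and "transitive_on V G"
    and "\<forall>v\<in>V. card (point_stabilizer G v) = 3"
    and "maximal_intersecting V G F"
    and "\<one>\<^bsub>BijGroup V\<^esub> \<in> F"
    and "card F = 4"
  shows "(\<forall>v\<in>V. \<not> point_stabilizer G v \<subseteq> F) \<and>
         (\<forall>x\<in>F - {\<one>\<^bsub>BijGroup V\<^esub>}. \<forall>y\<in>F - {\<one>\<^bsub>BijGroup V\<^esub>}. x \<noteq> y \<longrightarrow>
            \<not> (\<exists>v\<in>V. x \<in> point_stabilizer G v \<and> y \<in> point_stabilizer G v))"
proof -
  let ?e = "\<one>\<^bsub>BijGroup V\<^esub>"
  have finite_stabilizer: "finite (point_stabilizer G v)" if "v \<in> V" for v
    using assms(4) that by (intro card_ge_0_finite) simp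
  have one_in_stabilizer: "?e \<in> point_stabilizer G v" if "v \<in> V" for v
    using subgroup.one_closed[OF subgroup_point_stabilizer[OF assms(1) that]] by simp
  have stabilizer_not_subset: "\<not> point_stabilizer G v \<subseteq> F" if v: "v \<in> V" for v
  proof
    assume "point_stabilizer G v \<subseteq> F"
    moreover have "point_stabilizer G v \<noteq> {?e}" using assms(4) v by auto
    ultimately show False
      using maximal_intersecting_stabilizer_subset_card[OF assms(1) v assms(5)]
        finite_stabilizer[OF v] assms(4,7) v by simp
  qed
  moreover have "\<not> (\<exists>v\<in>V. x \<in> point_stabilizer G v \<and> y \<in> point_stabilizer G v)"
    if x: "x \<in> F - {?e}" and y: "y \<in> F - {?e}" and "x \<noteq> y" for x y
  proof
    assume "\<exists>v\<in>V. x \<in> point_stabilizer G v \<and> y \<in> point_stabilizer G v"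
    then obtain v where v: "v \<in> V" and sub: "{?e, x, y} \<subseteq> point_stabilizer G v"
      using one_in_stabilizer by blast
    have card_eq: "card {?e, x, y} = card (point_stabilizer G v)"
      using x y \<open>x \<noteq> y\<close> assms(4) v by auto
    have "point_stabilizer G v = {?e, x, y}"
      using card_subset_eq[OF finite_stabilizer[OF v] sub card_eq] by simp
    then show False using stabilizer_not_subset[OF v] x y assms(6) by auto
  qed
  ultimately show ?thesis by blast
qed

end
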